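(* Let $\omega\in\widehat{\mathcal D}$. Then there exists $K=K(\omega)>1$ such that the sequence $\{M_n\}_{n=0}^\infty=\{M_n(\omega,K)\}$ is lacunary, i.e. there exists $C>1$ with $M_{n+1}\ge CM_n$ for all $n\in\mathbb N\cup\{0\}$.
   Context: A radial weight is a nonnegative $\omega\in L^1([0,1))$; $\widehat\omega(r)=\int_r^1\omega(s)ds>0$ for all $r\in[0,1)$. $\omega\in\widehat{\mathcal D}$ means $\widehat\omega(r)\le C\widehat\omega(\frac{1+r}2)$ for some $C>0$ and all $0\le r<1$. For $K>1$ and $n\in\mathbb N\cup\{0\}$, $r_n=r_n(\omega,K)=\inf\{r\in[0,1):\widehat\omega(r)=\widehat\omega(0)K^{-n}\}$, and $M_n=M_n(\omega,K)=E\big(\frac1{1-r_n}\big)$, where $E(x)$ is the integer part of $x$. *)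

theory Defs
  imports "HOL-Analysis.Analysis"
begin

definition omega_hat :: "(real \<Rightarrow> real) \<Rightarrow> real \<Rightarrow> real" where
  "omega_hat w r = (LINT s:{r..<1}|lborel. w s)"

definition radial_weight :: "(real \<Rightarrow> real) \<Rightarrow> bool" where
  "radial_weight w \<longleftrightarrow>
     (\<forall>s\<in>{0..<1}. 0 \<le> w s) \<and> set_integrable lborel {0..<1::real} w \<and>
     (\<forall>r\<in>{0..<1}. omega_hat w r > 0)"

definition D_hat :: "(real \<Rightarrow> real) \<Rightarrow> bool" where
  "D_hat w \<longleftrightarrow> radial_weight w \<and>
     (\<exists>C>0. \<forall>r\<in>{0..<1}. omega_hat w r \<le> C * omega_hat w ((1 + r) / 2))"

definition r_seq :: "(real \<Rightarrow> real) \<Rightarrow> real \<Rightarrow> nat \<Rightarrow> real" where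
  "r_seq w K n = Inf {r\<in>{0..<1}. omega_hat w r = omega_hat w 0 * K powr (- real n)}"

definition M_seq :: "(real \<Rightarrow> real) \<Rightarrow> real \<Rightarrow> nat \<Rightarrow> int" where
  "M_seq w K n = \<lfloor>1 / (1 - r_seq w K n)\<rfloor>"

end

theory Submission
  imports Defs
begin

text \<open>Write \<open>W = omega_hat w\<close> and choose \<open>K\<close> larger than the doubling constant \<open>C\<close>
  of \<open>w\<close>. If \<open>W s = W a / K\<close> and \<open>s \<le> (1 + a) / 2\<close>, then monotonicity and doubling give
  \<open>W a \<le> C W ((1 + a) / 2) \<le> C W s < W a\<close>, which is absurd. Hence the level points satisfy
  \<open>1 - r\<^sub>n\<^sub>+\<^sub>1 \<le> (1 - r\<^sub>n) / 2\<close>, so \<open>1 / (1 - r\<^sub>n)\<close> at least doubles at each step, and so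
  does its integer part: \<open>M\<^sub>n\<^sub>+\<^sub>1 \<ge> 2 M\<^sub>n\<close>.\<close>

lemma radial_weight_integrable_on:
  assumes "radial_weight w"
  shows "w integrable_on {0..1}"
proof -
  have "w integrable_on {0..<1}"
    using assms unfolding radial_weight_def by (blast intro: set_borel_integral_eq_integral)
  then show ?thesis
    by (rule integrable_spike_set) (auto intro: negligible_subset[of "{1}"])
qed

lemma omega_hat_eq_integral:
  assumes "radial_weight w" "0 \<le> r" "r < 1"
  shows "omega_hat w r = integral {r..1} w"
proof -
  have "set_integrable lborel {0..<1::real} w"
    using assms unfolding radial_weight_def by blast
  then have "set_integrable lborel {r..<1::real} w"
    by (rule set_integrable_subset) (use assms in auto)
  then have "omega_hat w r = integral {r..<1} w"
    unfolding omega_hat_def by (rule set_borel_integral_eq_integral)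
  also have "\<dots> = integral {r..1} w"
    by (rule integral_spike_set) (auto intro: negligible_subset[of "{1}"])
  finally show ?thesis .
qed

lemma omega_hat_antimono:
  assumes "radial_weight w" "0 \<le> a" "a \<le> b" "b < 1"
  shows "omega_hat w b \<le> omega_hat w a"
proof -
  have int: "w integrable_on {a..1}"
    by (rule integrable_on_subinterval[OF radial_weight_integrable_on[OF assms(1)]])
       (use assms in auto)
  have "integral {a..b} w + integral {b..1} w = integral {a..1} w"
    by (rule Henstock_Kurzweil_Integration.integral_combine) (use assms int in auto)
  moreover have "0 \<le> integral {a..b} w"
  proof (rule integral_nonneg)
    show "w integrable_on {a..b}"
      by (rule integrable_on_subinterval[OF int]) (use assms in auto)
  qed (use assms in \<open>auto simp: radial_weight_def\<close>)
  ultimately show ?thesis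
    using omega_hat_eq_integral[OF assms(1)] assms by auto
qed

definition omega_level :: "(real \<Rightarrow> real) \<Rightarrow> real \<Rightarrow> real set" where
  "omega_level w y = {r\<in>{0..<1}. omega_hat w r = y}"

lemma bdd_below_omega_level: "bdd_below (omega_level w y)"
  unfolding omega_level_def by (rule bdd_belowI[of _ 0]) auto

lemma r_seq_eq_Inf_omega_level:
  "r_seq w K n = Inf (omega_level w (omega_hat w 0 * K powr (- real n)))"
  unfolding r_seq_def omega_level_def ..

lemma omega_level_nonempty:
  assumes "radial_weight w" "0 < y" "y \<le> omega_hat w 0"
  shows "omega_level w y \<noteq> {}"
proof -
  have "continuous_on {0..1} (\<lambda>x. integral {x..1} w)"
    by (rule indefinite_integral_continuous_1'[OF radial_weight_integrable_on[OF assms(1)]])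
  then have "\<exists>x. 0 \<le> x \<and> x \<le> 1 \<and> integral {x..1} w = y"
    by (intro IVT2') (use assms omega_hat_eq_integral[OF assms(1), of 0] in auto)
  then obtain x where x: "0 \<le> x" "x \<le> 1" "integral {x..1} w = y"
    by blast
  with assms have "x \<noteq> 1"
    by auto
  with x omega_hat_eq_integral[OF assms(1), of x] have "x \<in> omega_level w y"
    by (simp add: omega_level_def)
  then show ?thesis
    by blast
qed

lemma Inf_omega_level_bounds:
  assumes "omega_level w y \<noteq> {}"
  shows "0 \<le> Inf (omega_level w y)" "Inf (omega_level w y) < 1"
proof -
  obtain a where a: "a \<in> omega_level w y"
    using assms by blast
  from a bdd_below_omega_level have "Inf (omega_level w y) \<le> a"
    by (rule cInf_lower)
  with a show "Inf (omega_level w y) < 1"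
    unfolding omega_level_def by auto
  show "0 \<le> Inf (omega_level w y)"
    by (rule cInf_greatest[OF assms]) (auto simp: omega_level_def)
qed

lemma omega_level_separated:
  assumes w: "radial_weight w"
    and doubling: "\<And>r. r \<in> {0..<1} \<Longrightarrow> omega_hat w r \<le> C * omega_hat w ((1 + r) / 2)"
    and "0 < C" "C < K" "0 < y"
    and a: "a \<in> omega_level w y" and s: "s \<in> omega_level w (y / K)"
  shows "(1 + a) / 2 < s"
proof (rule ccontr)
  assume "\<not> (1 + a) / 2 < s"
  with a s have "omega_hat w ((1 + a) / 2) \<le> omega_hat w s"
    by (intro omega_hat_antimono[OF w]) (auto simp: omega_level_def)
  also have "\<dots> = y / K"
    using s by (simp add: omega_level_def)
  also have "\<dots> < y / C"
    using assms by (intro divide_strict_left_mono) auto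
  finally have "C * omega_hat w ((1 + a) / 2) < y"
    using \<open>0 < C\<close> by (simp add: field_simps)
  moreover have "y \<le> C * omega_hat w ((1 + a) / 2)"
    using doubling[of a] a by (auto simp: omega_level_def)
  ultimately show False
    by linarith
qed

lemma Inf_omega_level_midpoint_le:
  assumes w: "radial_weight w"
    and doubling: "\<And>r. r \<in> {0..<1} \<Longrightarrow> omega_hat w r \<le> C * omega_hat w ((1 + r) / 2)"
    and "0 < C" "C < K" "0 < y"
    and ne: "omega_level w y \<noteq> {}" "omega_level w (y / K) \<noteq> {}"
  shows "(1 + Inf (omega_level w y)) / 2 \<le> Inf (omega_level w (y / K))"
proof (rule cInf_greatest[OF ne(2)])
  fix s
  assume s: "s \<in> omega_level w (y / K)"
  obtain a where a: "a \<in> omega_level w y"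
    using ne(1) by blast
  from a bdd_below_omega_level have "Inf (omega_level w y) \<le> a"
    by (rule cInf_lower)
  moreover have "(1 + a) / 2 < s"
    using w doubling assms(3-5) a s by (rule omega_level_separated)
  ultimately show "(1 + Inf (omega_level w y)) / 2 \<le> s"
    by simp
qed

lemma floor_inverse_distance_doubles:
  fixes r r' :: real
  assumes "0 \<le> r" "r' < 1" "(1 + r) / 2 \<le> r'"
  shows "2 * \<lfloor>1 / (1 - r)\<rfloor> \<le> \<lfloor>1 / (1 - r')\<rfloor>"
proof -
  have "2 * (1 / (1 - r)) \<le> 1 / (1 - r')"
    using assms by (simp add: field_simps)
  then have "\<lfloor>1 / (1 - r) + 1 / (1 - r)\<rfloor> \<le> \<lfloor>1 / (1 - r')\<rfloor>"
    by (intro floor_mono) simp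
  then show ?thesis
    using le_floor_add[of "1 / (1 - r)" "1 / (1 - r)"] by linarith
qed

theorem lemma2p2:
  fixes w :: "real \<Rightarrow> real"
  assumes "D_hat w"
  shows "\<exists>K>1. \<exists>C>1. \<forall>n. real_of_int (M_seq w K (Suc n)) \<ge> C * real_of_int (M_seq w K n)"
proof -
  have w: "radial_weight w"
    using assms unfolding D_hat_def by blast
  obtain C where C: "0 < C" "\<And>r. r \<in> {0..<1} \<Longrightarrow> omega_hat w r \<le> C * omega_hat w ((1 + r) / 2)"
    using assms unfolding D_hat_def by blast
  define K where "K = max C 1 + 1"
  have K: "1 < K" "C < K"
    unfolding K_def by auto
  define y where "y n = omega_hat w 0 * K powr (- real n)" for n
  have y_Suc: "y (Suc n) = y n / K" for n
    using K by (simp add: y_def powr_diff powr_minus divide_inverse)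
  have y_pos: "0 < y n" for n
    using w K by (simp add: y_def radial_weight_def)
  have "y n \<le> omega_hat w 0" for n
    using K w powr_mono[of "- real n" 0 K] by (simp add: y_def radial_weight_def mult_le_cancel_left1)
  then have ne: "omega_level w (y n) \<noteq> {}" for n
    using omega_level_nonempty[OF w y_pos] by blast
  have r_seq: "r_seq w K n = Inf (omega_level w (y n))" for n
    unfolding r_seq_eq_Inf_omega_level y_def ..
  have "(1 + r_seq w K n) / 2 \<le> r_seq w K (Suc n)" for n
    unfolding r_seq y_Suc
    by (rule Inf_omega_level_midpoint_le[OF w C(2) C(1) K(2) y_pos ne ne[of "Suc n", unfolded y_Suc]])
  then have "2 * M_seq w K n \<le> M_seq w K (Suc n)" for n
    unfolding M_seq_def r_seq using Inf_omega_level_bounds[OF ne]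
    by (intro floor_inverse_distance_doubles) auto
  then have "2 * real_of_int (M_seq w K n) \<le> real_of_int (M_seq w K (Suc n))" for n
    by (metis of_int_le_iff of_int_mult of_int_numeral)
  with K(1) show ?thesis
    by (intro exI[of _ K] exI[of _ "2::real"] conjI allI) auto
qed

end
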